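(* Let $\sigma(x)=1/(1+e^{-x})$, let $N,d\in\mathbb{N}$ with $N>2$, and let $f_{mult}$ and $c_{56}$ be as in the context. Let $0<A\le1$ and assume $c_{56}\cdot4^{dN}\cdot A^{N-1}\le1$. Then there exists a feedforward neural network $f_{mult,d}:\mathbb{R}^d\to\mathbb{R}$ with activation function $\sigma$, with at most $\lceil\log_2 d\rceil$ hidden layers and at most $2Nd$ neurons in each layer, all of whose weights are bounded in absolute value by a constant not depending on $A$, such that for all $x_1,\dots,x_d\in[-A,A]$ $$\Big|f_{mult,d}(x_1,\dots,x_d)-\prod_{j=1}^dx_j\Big|\le c_{57}A^N,$$ where $c_{57}\ge0$ is a constant not depending on $A$.
   Context: Fix $t_\sigma\in\mathbb{R}$ with $\sigma''(t_\sigma)\ne0$, and $\alpha_j,\beta_j$ ($j=0,\dots,N-1$), $c_{54}\ge0$ such that $f_{net,x^2}(x)=\frac{2}{\sigma''(t_\sigma)}\sum_{j=0}^{N-1}\alpha_j\sigma(\beta_jx+t_\sigma)$ satisfies $|f_{net,x^2}(x)-x^2|\le c_{54}A^N$ for all $A>0$, $x\in[-A,A]$. Let $f_{mult}(x,y)=\frac14(f_{net,x^2}(x+y)-f_{net,x^2}(x-y))$ and let $c_{56}>0$ be a constant (depending only on $c_{54},N$) such that $|f_{mult}(x,y)-xy|\le c_{56}A^N$ for all $A>0$, $x,y\in[-A,A]$. A feedforward network with $\sigma$ activation: each hidden neuron computes $\sigma$ of an affine combination of the outputs of the previous layer (or of the inputs), and the output is an affine combination of the last hidden layer (or of the inputs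 if there are no hidden layers). *)

theory Defs
  imports "HOL-Analysis.Analysis"
begin

definition sigmoid :: "real \<Rightarrow> real" where
  "sigmoid x = 1 / (1 + exp (- x))"

definition f_net_sq :: "real \<Rightarrow> (nat \<Rightarrow> real) \<Rightarrow> (nat \<Rightarrow> real) \<Rightarrow> nat \<Rightarrow> real \<Rightarrow> real" where
  "f_net_sq t \<alpha> \<beta> N x =
     2 / deriv (deriv sigmoid) t * (\<Sum>j<N. \<alpha> j * sigmoid (\<beta> j * x + t))"

definition f_mult :: "real \<Rightarrow> (nat \<Rightarrow> real) \<Rightarrow> (nat \<Rightarrow> real) \<Rightarrow> nat \<Rightarrow> real \<Rightarrow> real \<Rightarrow> real" where
  "f_mult t \<alpha> \<beta> N x y = (f_net_sq t \<alpha> \<beta> N (x + y) - f_net_sq t \<alpha> \<beta> N (x - y)) / 4"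

text \<open>Feedforward networks. A neuron is (weights, bias); a layer is a list of neurons.
  A network is a list of hidden layers together with an affine output neuron.\<close>
type_synonym neuron = "real list \<times> real"
type_synonym layer = "neuron list"
type_synonym ffnet = "layer list \<times> neuron"

definition affine :: "neuron \<Rightarrow> real list \<Rightarrow> real" where
  "affine n x = sum_list (map2 (*) (fst n) x) + snd n"

definition eval_layer :: "(real \<Rightarrow> real) \<Rightarrow> layer \<Rightarrow> real list \<Rightarrow> real list" where
  "eval_layer act L x = map (\<lambda>n. act (affine n x)) L"

fun eval_hidden :: "(real \<Rightarrow> real) \<Rightarrow> layer list \<Rightarrow> real list \<Rightarrow> real list" where
  "eval_hidden act [] x = x"
| "eval_hidden act (L # Ls) x = eval_hidden act Ls (eval_layer act L x)"

definition net_eval :: "(real \<Rightarrow> real) \<Rightarrow> ffnet \<Rightarrow> real list \<Rightarrow> real" where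
  "net_eval act F x = affine (snd F) (eval_hidden act (fst F) x)"

fun layers_wf :: "nat \<Rightarrow> layer list \<Rightarrow> nat \<Rightarrow> bool" where
  "layers_wf n [] m = (n = m)"
| "layers_wf n (L # Ls) m = ((\<forall>nr\<in>set L. length (fst nr) = n) \<and> layers_wf (length L) Ls m)"

definition net_wf :: "nat \<Rightarrow> ffnet \<Rightarrow> bool" where
  "net_wf d F = (\<exists>m. layers_wf d (fst F) m \<and> length (fst (snd F)) = m)"

definition neuron_bounded :: "real \<Rightarrow> neuron \<Rightarrow> bool" where
  "neuron_bounded B nr = ((\<forall>w\<in>set (fst nr). \<bar>w\<bar> \<le> B) \<and> \<bar>snd nr\<bar> \<le> B)"

definition weights_bounded :: "real \<Rightarrow> ffnet \<Rightarrow> bool" where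
  "weights_bounded B F = ((\<forall>L\<in>set (fst F). \<forall>nr\<in>set L. neuron_bounded B nr) \<and> neuron_bounded B (snd F))"

end

theory Submission
  imports Defs "HOL-Computational_Algebra.Polynomial" "HOL-Library.Log_Nat"
begin

text \<open>The network multiplies its \<open>d\<close> inputs pairwise along a binary tree of depth
  \<open>\<lceil>log\<^sub>2 d\<rceil>\<close>, one hidden layer per level: a pair is multiplied by \<open>f_mult\<close>
  (\<open>2N\<close> neurons), an unpaired entry is passed on by \<open>\<Sum>\<^sub>j 4 c\<^sub>j \<sigma>(j u) = u + O(|u|\<^sup>N)\<close>,
  with weights \<open>c\<^sub>j\<close> that cancel all Taylor terms of \<open>\<sigma>\<close> at \<open>0\<close> of order below \<open>N\<close>
  except the linear one. The network does not depend on \<open>A\<close>, so neither do its weights.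
  If each value of a level is within \<open>C A\<^sup>N\<close> of an exact partial product of modulus at
  most \<open>A \<le> 1\<close>, it has modulus at most \<open>(1 + C) A\<close>, and the next level is within
  \<open>((c56 + K) (1 + C)\<^sup>N + (2 + C) C) A\<^sup>N\<close>; iterating over the levels gives \<open>c57\<close>.\<close>

section \<open>Lagrange weights and Taylor expansion\<close>

definition lagrange_basis :: "nat \<Rightarrow> nat \<Rightarrow> real poly" where
  "lagrange_basis n j =
     smult (1 / (\<Prod>i\<in>{..<n}-{j}. real j - real i)) (\<Prod>i\<in>{..<n}-{j}. [:- real i, 1:])"

lemma poly_lagrange_basis:
  assumes "j < n" "k < n"
  shows "poly (lagrange_basis n j) (real k) = (if k = j then 1 else 0)"
proof (cases "k = j")
  case True
  have "(\<Prod>i\<in>{..<n}-{j}. real j - real i) \<noteq> 0"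
    by (subst prod_zero_iff) auto
  then show ?thesis using True by (simp add: lagrange_basis_def poly_prod)
next
  case False
  have "(\<Prod>i\<in>{..<n}-{j}. poly [:- real i, 1:] (real k)) = 0"
    using False assms by (intro prod_zero) auto
  then show ?thesis using False by (simp add: lagrange_basis_def poly_prod)
qed

lemma degree_lagrange_basis:
  assumes "j < n"
  shows "degree (lagrange_basis n j) < n"
proof -
  have "degree (\<Prod>i\<in>{..<n}-{j}. [:- real i, 1:]) \<le> (\<Sum>i\<in>{..<n}-{j}. degree [:- real i, 1:])"
    using degree_prod_sum_le[of "{..<n}-{j}" "\<lambda>i. [:- real i, 1:]"] by (simp add: o_def)
  also have "\<dots> < n" using assms by (simp add: card_Diff_singleton)
  finally show ?thesis
    unfolding lagrange_basis_def using degree_smult_le order.strict_trans1 by blast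
qed

lemma sum_lagrange_basis_monom:
  assumes "m < n"
  shows "(\<Sum>j<n. smult (real j ^ m) (lagrange_basis n j)) = monom 1 m"
proof (rule poly_eqI_degree[where A = "real ` {..<n}"])
  fix x assume "x \<in> real ` {..<n}"
  then obtain k where k: "k < n" "x = real k" by auto
  then show "poly (\<Sum>j<n. smult (real j ^ m) (lagrange_basis n j)) x = poly (monom 1 m) x"
    by (simp add: poly_sum poly_lagrange_basis poly_monom if_distrib cong: if_cong)
next
  have card: "card (real ` {..<n}) = n" by (simp add: card_image)
  show "degree (monom (1::real) m) < card (real ` {..<n})"
    using card assms by (simp add: degree_monom_eq)
  have "degree (\<Sum>j<n. smult (real j ^ m) (lagrange_basis n j)) \<le> n - 1"
    using degree_lagrange_basis degree_smult_le
    by (intro degree_sum_le) (fastforce intro: order_trans)+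
  then show "degree (\<Sum>j<n. smult (real j ^ m) (lagrange_basis n j)) < card (real ` {..<n})"
    using card assms by linarith
qed

lemma sum_lagrange_basis_linear_coeff:
  assumes "m < n"
  shows "(\<Sum>j<n. coeff (lagrange_basis n j) 1 * real j ^ m) = (if m = 1 then 1 else 0)"
  using arg_cong[OF sum_lagrange_basis_monom[OF assms], of "\<lambda>p. coeff p 1"]
  by (simp add: coeff_sum coeff_monom mult.commute)

lemma Maclaurin_remainder_bound:
  fixes f :: "real \<Rightarrow> real"
  assumes "diff 0 = f"
    and "\<And>m x. (diff m has_real_derivative diff (Suc m) x) (at x)"
    and "\<And>x. \<bar>diff n x\<bar> \<le> K"
  shows "\<bar>f x - (\<Sum>m<n. diff m 0 / fact m * x ^ m)\<bar> \<le> K / fact n * \<bar>x\<bar> ^ n"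
proof -
  obtain s where "f x = (\<Sum>m<n. diff m 0 / fact m * x ^ m) + diff n s / fact n * x ^ n"
    using Maclaurin_all_le[of diff f] assms(1,2) by blast
  then have "\<bar>f x - (\<Sum>m<n. diff m 0 / fact m * x ^ m)\<bar> = \<bar>diff n s\<bar> / fact n * \<bar>x\<bar> ^ n"
    by (simp add: abs_mult power_abs)
  also have "\<dots> \<le> K / fact n * \<bar>x\<bar> ^ n"
    using assms(3)[of s] by (intro mult_right_mono divide_right_mono) auto
  finally show ?thesis .
qed

lemma sum_lagrange_basis_linear_coeff_poly:
  assumes "2 \<le> n"
  shows "(\<Sum>j<n. coeff (lagrange_basis n j) 1 * (\<Sum>m<n. a m * (real j * u) ^ m)) = a 1 * u"
proof -
  have "(\<Sum>j<n. coeff (lagrange_basis n j) 1 * (\<Sum>m<n. a m * (real j * u) ^ m))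
      = (\<Sum>j<n. \<Sum>m<n. coeff (lagrange_basis n j) 1 * (a m * (real j * u) ^ m))"
    by (simp add: sum_distrib_left)
  also have "\<dots> = (\<Sum>m<n. \<Sum>j<n. coeff (lagrange_basis n j) 1 * (a m * (real j * u) ^ m))"
    by (rule sum.swap)
  also have "\<dots> = (\<Sum>m<n. a m * u ^ m * (\<Sum>j<n. coeff (lagrange_basis n j) 1 * real j ^ m))"
    by (simp add: sum_distrib_left power_mult_distrib mult_ac)
  also have "\<dots> = (\<Sum>m<n. a m * u ^ m * (if m = 1 then 1 else 0))"
    using sum_lagrange_basis_linear_coeff by (intro sum.cong) auto
  also have "\<dots> = a 1 * u"
    using assms by (simp add: if_distrib cong: if_cong)
  finally show ?thesis .
qed

lemma lagrange_weighted_samples_approx_linear: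
  fixes f :: "real \<Rightarrow> real"
  assumes "2 \<le> n" "diff 0 = f"
    and "\<And>m x. (diff m has_real_derivative diff (Suc m) x) (at x)"
    and "\<And>x. \<bar>diff n x\<bar> \<le> K"
  shows "\<exists>K'\<ge>0. \<forall>u. \<bar>(\<Sum>j<n. coeff (lagrange_basis n j) 1 * f (real j * u)) - diff 1 0 * u\<bar>
                      \<le> K' * \<bar>u\<bar> ^ n"
proof -
  define c where "c j = coeff (lagrange_basis n j) 1" for j
  define T where "T x = (\<Sum>m<n. diff m 0 / fact m * x ^ m)" for x
  have K: "K \<ge> 0" using assms(4)[of 0] by linarith
  define K' where "K' = K / fact n * (\<Sum>j<n. \<bar>c j\<bar> * real j ^ n)"
  have "\<bar>(\<Sum>j<n. c j * f (real j * u)) - diff 1 0 * u\<bar> \<le> K' * \<bar>u\<bar> ^ n" for u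
  proof -
    have "(\<Sum>j<n. c j * T (real j * u)) = diff 1 0 * u"
      using sum_lagrange_basis_linear_coeff_poly[OF assms(1), of "\<lambda>m. diff m 0 / fact m"]
      by (simp add: c_def T_def)
    then have "\<bar>(\<Sum>j<n. c j * f (real j * u)) - diff 1 0 * u\<bar>
        = \<bar>\<Sum>j<n. c j * (f (real j * u) - T (real j * u))\<bar>"
      by (simp add: right_diff_distrib sum_subtractf)
    also have "\<dots> \<le> (\<Sum>j<n. \<bar>c j\<bar> * (K / fact n * \<bar>real j * u\<bar> ^ n))"
    proof (intro order_trans[OF sum_abs] sum_mono)
      fix j
      have "\<bar>f (real j * u) - T (real j * u)\<bar> \<le> K / fact n * \<bar>real j * u\<bar> ^ n"
        unfolding T_def by (rule Maclaurin_remainder_bound[OF assms(2-4)])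
      then show "\<bar>c j * (f (real j * u) - T (real j * u))\<bar>
          \<le> \<bar>c j\<bar> * (K / fact n * \<bar>real j * u\<bar> ^ n)"
        unfolding abs_mult by (rule mult_left_mono) simp
    qed
    also have "\<dots> = K' * \<bar>u\<bar> ^ n"
      by (simp add: K'_def sum_distrib_left sum_distrib_right abs_mult power_mult_distrib mult_ac)
    finally show ?thesis .
  qed
  moreover have "K' \<ge> 0"
    unfolding K'_def using K by (intro mult_nonneg_nonneg divide_nonneg_nonneg sum_nonneg) auto
  ultimately show ?thesis unfolding c_def by blast
qed

section \<open>Derivatives of the logistic function\<close>

lemma sigmoid_bounds: "0 < sigmoid x" "sigmoid x < 1"
  unfolding sigmoid_def by (auto simp: add_pos_pos)

lemma has_real_derivative_sigmoid:
  "(sigmoid has_real_derivative sigmoid x * (1 - sigmoid x)) (at x)"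
proof -
  have pos: "1 + exp (- x) \<noteq> 0" by (metis exp_gt_zero add_pos_pos zero_less_one less_irrefl)
  have "((\<lambda>x. inverse (1 + exp (- x))) has_real_derivative
          - (- exp (- x) * inverse ((1 + exp (- x)) ^ Suc (Suc 0)))) (at x)"
    by (intro DERIV_inverse_fun pos) (auto intro!: derivative_eq_intros)
  moreover have "sigmoid = (\<lambda>x. inverse (1 + exp (- x)))"
    by (simp add: fun_eq_iff sigmoid_def divide_inverse)
  ultimately show ?thesis using pos by (simp add: sigmoid_def field_simps)
qed

lemma has_real_derivative_poly_sigmoid:
  "((\<lambda>x. poly p (sigmoid x)) has_real_derivative poly (pderiv p * [:0, 1, -1:]) (sigmoid x)) (at x)"
  using DERIV_chain2[OF poly_DERIV has_real_derivative_sigmoid] by (simp add: algebra_simps)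

lemma higher_deriv_sigmoid_poly: "\<exists>p. (deriv ^^ n) sigmoid = (\<lambda>x. poly p (sigmoid x))"
proof (induction n)
  case 0
  show ?case by (intro exI[of _ "[:0, 1:]"]) simp
next
  case (Suc n)
  then obtain p where "(deriv ^^ n) sigmoid = (\<lambda>x. poly p (sigmoid x))" by blast
  then have "(deriv ^^ Suc n) sigmoid = (\<lambda>x. poly (pderiv p * [:0, 1, -1:]) (sigmoid x))"
    using DERIV_imp_deriv[OF has_real_derivative_poly_sigmoid] by auto
  then show ?case by blast
qed

lemma has_real_derivative_higher_deriv_sigmoid:
  "((deriv ^^ n) sigmoid has_real_derivative (deriv ^^ Suc n) sigmoid x) (at x)"
proof -
  obtain p where p: "(deriv ^^ n) sigmoid = (\<lambda>x. poly p (sigmoid x))"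
    using higher_deriv_sigmoid_poly by blast
  show ?thesis
    unfolding funpow.simps o_def p using has_real_derivative_poly_sigmoid DERIV_imp_deriv by metis
qed

lemma higher_deriv_sigmoid_bounded: "\<exists>K. \<forall>x. \<bar>(deriv ^^ n) sigmoid x\<bar> \<le> K"
proof -
  obtain p where p: "(deriv ^^ n) sigmoid = (\<lambda>x. poly p (sigmoid x))"
    using higher_deriv_sigmoid_poly by blast
  have "bounded (poly p ` {0..1})"
    by (intro compact_imp_bounded compact_continuous_image continuous_intros) auto
  then obtain K where K: "\<forall>y \<in> poly p ` {0..1}. \<bar>y\<bar> \<le> K"
    unfolding bounded_iff real_norm_def by blast
  have "sigmoid x \<in> {0..1}" for x using sigmoid_bounds[of x] by auto
  then show ?thesis unfolding p using K by blast
qed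

lemma deriv_sigmoid_0: "deriv sigmoid 0 = 1 / 4"
  using DERIV_imp_deriv[OF has_real_derivative_sigmoid, of 0] by (simp add: sigmoid_def)

definition sigmoid_id :: "nat \<Rightarrow> real \<Rightarrow> real" where
  "sigmoid_id n u = (\<Sum>j<n. 4 * coeff (lagrange_basis n j) 1 * sigmoid (real j * u))"

lemma sigmoid_id_approx:
  assumes "2 \<le> n"
  shows "\<exists>K\<ge>0. \<forall>u. \<bar>sigmoid_id n u - u\<bar> \<le> K * \<bar>u\<bar> ^ n"
proof -
  obtain K where "\<forall>x. \<bar>(deriv ^^ n) sigmoid x\<bar> \<le> K"
    using higher_deriv_sigmoid_bounded by blast
  then have "\<exists>K'\<ge>0. \<forall>u. \<bar>(\<Sum>j<n. coeff (lagrange_basis n j) 1 * sigmoid (real j * u))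
                              - deriv sigmoid 0 * u\<bar> \<le> K' * \<bar>u\<bar> ^ n"
    using lagrange_weighted_samples_approx_linear[OF assms, of "\<lambda>m. (deriv ^^ m) sigmoid" sigmoid K]
      has_real_derivative_higher_deriv_sigmoid by simp
  then obtain K' where K': "K' \<ge> 0"
    "\<And>u. \<bar>(\<Sum>j<n. coeff (lagrange_basis n j) 1 * sigmoid (real j * u)) - u / 4\<bar> \<le> K' * \<bar>u\<bar> ^ n"
    by (auto simp: deriv_sigmoid_0)
  show ?thesis
  proof (intro exI[of _ "4 * K'"] conjI allI)
    fix u
    have "sigmoid_id n u - u
        = 4 * ((\<Sum>j<n. coeff (lagrange_basis n j) 1 * sigmoid (real j * u)) - u / 4)"
      by (simp add: sigmoid_id_def sum_distrib_left algebra_simps)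
    then show "\<bar>sigmoid_id n u - u\<bar> \<le> 4 * K' * \<bar>u\<bar> ^ n"
      using K'(2)[of u] by (simp add: abs_mult)
  qed (use K' in simp)
qed

section \<open>Error propagation along the product tree\<close>

fun combine_pairs :: "('a \<Rightarrow> 'a \<Rightarrow> 'a) \<Rightarrow> ('a \<Rightarrow> 'a) \<Rightarrow> 'a list \<Rightarrow> 'a list" where
  "combine_pairs g h [] = []"
| "combine_pairs g h [a] = [h a]"
| "combine_pairs g h (a # b # xs) = g a b # combine_pairs g h xs"

lemma prod_list_combine_pairs: "prod_list (combine_pairs (*) (\<lambda>x. x) xs) = prod_list xs"
  by (induction xs rule: induct_list012) (auto simp: mult.assoc)

lemma prod_list_combine_pairs_funpow: "prod_list ((combine_pairs (*) (\<lambda>x. x) ^^ k) xs) = prod_list xs"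
  by (induction k) (auto simp: prod_list_combine_pairs)

definition pairing_error :: "real \<Rightarrow> nat \<Rightarrow> real \<Rightarrow> real" where
  "pairing_error a N C = a * (1 + C) ^ N + (2 + C) * C"

lemma pairing_error_funpow_nonneg: "0 \<le> a \<Longrightarrow> 0 \<le> C \<Longrightarrow> 0 \<le> (pairing_error a N ^^ k) C"
  by (induction k) (auto simp: pairing_error_def)

context
  fixes N :: nat and A c K :: real and g :: "real \<Rightarrow> real \<Rightarrow> real" and h :: "real \<Rightarrow> real"
  assumes N: "1 \<le> N" and A: "0 < A" "A \<le> 1" and c: "0 \<le> c" and K: "0 \<le> K"
    and g: "\<And>r x y. 0 < r \<Longrightarrow> x \<in> {-r..r} \<Longrightarrow> y \<in> {-r..r} \<Longrightarrow> \<bar>g x y - x * y\<bar> \<le> c * r ^ N"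
    and h: "\<And>u. \<bar>h u - u\<bar> \<le> K * \<bar>u\<bar> ^ N"
begin

lemma abs_le_of_close:
  assumes "\<bar>v - p\<bar> \<le> C * A ^ N" "\<bar>p\<bar> \<le> A" "0 \<le> C"
  shows "\<bar>v\<bar> \<le> (1 + C) * A"
proof -
  have "C * A ^ N \<le> C * A"
    using A N assms(3) by (intro mult_left_mono power_decreasing[of 1 N A, simplified]) auto
  then show ?thesis using assms(1,2) by (simp add: algebra_simps abs_le_iff)
qed

lemma identity_step_error:
  assumes "\<bar>v - p\<bar> \<le> C * A ^ N" "\<bar>p\<bar> \<le> A" "0 \<le> C"
  shows "\<bar>h v - p\<bar> \<le> pairing_error (c + K) N C * A ^ N"
proof -
  have "\<bar>v\<bar> ^ N \<le> ((1 + C) * A) ^ N"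
    using abs_le_of_close[OF assms] by (intro power_mono) auto
  then have "K * \<bar>v\<bar> ^ N \<le> K * (1 + C) ^ N * A ^ N"
    using K by (simp add: power_mult_distrib mult_left_mono mult.assoc)
  then have "\<bar>h v - v\<bar> \<le> K * (1 + C) ^ N * A ^ N"
    using h[of v] by linarith
  moreover have "C \<le> (2 + C) * C"
    using assms(3) by (simp add: distrib_right)
  then have "C * A ^ N \<le> (2 + C) * C * A ^ N"
    using A by (simp add: mult_right_mono)
  moreover have "0 \<le> c * (1 + C) ^ N * A ^ N"
    using c A assms(3) by simp
  ultimately show ?thesis using assms(1) unfolding pairing_error_def by (simp add: algebra_simps abs_le_iff)
qed

lemma product_step_error:
  assumes "\<bar>v1 - p1\<bar> \<le> C * A ^ N" "\<bar>p1\<bar> \<le> A" "\<bar>v2 - p2\<bar> \<le> C * A ^ N" "\<bar>p2\<bar> \<le> A" "0 \<le> C"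
  shows "\<bar>g v1 v2 - p1 * p2\<bar> \<le> pairing_error (c + K) N C * A ^ N"
proof -
  have v1: "\<bar>v1\<bar> \<le> (1 + C) * A" and v2: "\<bar>v2\<bar> \<le> (1 + C) * A"
    using abs_le_of_close assms by blast+
  have "\<bar>g v1 v2 - v1 * v2\<bar> \<le> c * (1 + C) ^ N * A ^ N"
    using g[of "(1 + C) * A"] v1 v2 A assms(5) by (simp add: abs_le_iff power_mult_distrib mult.assoc)
  moreover have "\<bar>v1 * v2 - p1 * p2\<bar> \<le> (2 + C) * (C * A ^ N)"
  proof -
    have "v1 * v2 - p1 * p2 = v1 * (v2 - p2) + p2 * (v1 - p1)"
      by (simp add: algebra_simps)
    then have "\<bar>v1 * v2 - p1 * p2\<bar> \<le> \<bar>v1\<bar> * \<bar>v2 - p2\<bar> + \<bar>p2\<bar> * \<bar>v1 - p1\<bar>"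
      by (metis abs_mult abs_triangle_ineq)
    also have "\<dots> \<le> (1 + C) * A * (C * A ^ N) + A * (C * A ^ N)"
      using assms v1 by (intro add_mono mult_mono) auto
    also have "\<dots> \<le> (1 + C) * (C * A ^ N) + C * A ^ N"
    proof -
      have "A * (C * A ^ N) \<le> C * A ^ N"
        using A assms(5) by (intro mult_left_le_one_le) auto
      moreover from this have "(1 + C) * (A * (C * A ^ N)) \<le> (1 + C) * (C * A ^ N)"
        using assms(5) by (intro mult_left_mono) auto
      ultimately show ?thesis by (simp add: mult.assoc)
    qed
    finally show ?thesis by (simp add: algebra_simps)
  qed
  moreover have "0 \<le> K * (1 + C) ^ N * A ^ N" using K A assms(5) by simp
  ultimately show ?thesis unfolding pairing_error_def by (simp add: algebra_simps abs_le_iff)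
qed

lemma combine_pairs_error:
  assumes "0 \<le> C" "list_all2 (\<lambda>v p. \<bar>v - p\<bar> \<le> C * A ^ N \<and> \<bar>p\<bar> \<le> A) vs ps"
  shows "list_all2 (\<lambda>v p. \<bar>v - p\<bar> \<le> pairing_error (c + K) N C * A ^ N \<and> \<bar>p\<bar> \<le> A)
           (combine_pairs g h vs) (combine_pairs (*) (\<lambda>x. x) ps)"
  using assms(2)
proof (induction ps arbitrary: vs rule: induct_list012)
  case (2 p)
  then show ?case using identity_step_error assms(1) by (auto simp: list_all2_Cons2)
next
  case (3 p1 p2 ps)
  have "\<bar>p1 * p2\<bar> \<le> A" if "\<bar>p1\<bar> \<le> A" "\<bar>p2\<bar> \<le> A"
  proof -
    have "\<bar>p1\<bar> * \<bar>p2\<bar> \<le> A * 1"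
      using that A by (intro mult_mono) auto
    then show ?thesis by (simp add: abs_mult)
  qed
  with "3.prems" "3.IH"(1) show ?case using product_step_error assms(1) by (auto simp: list_all2_Cons2)
qed simp

lemma combine_pairs_funpow_error:
  assumes "0 \<le> C" "list_all2 (\<lambda>v p. \<bar>v - p\<bar> \<le> C * A ^ N \<and> \<bar>p\<bar> \<le> A) vs ps"
  shows "list_all2 (\<lambda>v p. \<bar>v - p\<bar> \<le> (pairing_error (c + K) N ^^ k) C * A ^ N \<and> \<bar>p\<bar> \<le> A)
           ((combine_pairs g h ^^ k) vs) ((combine_pairs (*) (\<lambda>x. x) ^^ k) ps)"
proof (induction k)
  case 0
  then show ?case using assms(2) by simp
next
  case (Suc k)
  have "0 \<le> (pairing_error (c + K) N ^^ k) C"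
    using c K assms(1) by (simp add: pairing_error_funpow_nonneg)
  from combine_pairs_error[OF this Suc.IH] show ?case by simp
qed

end

section \<open>The product network\<close>

definition neuron_comb :: "real \<Rightarrow> real \<Rightarrow> real \<Rightarrow> neuron \<Rightarrow> neuron \<Rightarrow> neuron" where
  "neuron_comb a b c n1 n2 =
     (map2 (\<lambda>u v. a * u + b * v) (fst n1) (fst n2), a * snd n1 + b * snd n2 + c)"

lemma affine_neuron_comb:
  assumes "length (fst n1) = length y" "length (fst n2) = length y"
  shows "affine (neuron_comb a b c n1 n2) y = a * affine n1 y + b * affine n2 y + c"
proof -
  have "sum_list (map2 (*) (map2 (\<lambda>u v. a * u + b * v) w1 w2) y)
      = a * sum_list (map2 (*) w1 y) + b * sum_list (map2 (*) w2 y)"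
    if "length w1 = length y" "length w2 = length y" for w1 w2 :: "real list"
    using that
  proof (induction y arbitrary: w1 w2)
    case (Cons z y)
    then obtain u1 r1 u2 r2 where "w1 = u1 # r1" "w2 = u2 # r2"
      by (metis length_Suc_conv)
    with Cons show ?case by (simp add: algebra_simps)
  qed simp
  with assms show ?thesis
    unfolding affine_def neuron_comb_def by (simp add: algebra_simps)
qed

lemma affine_map_upt:
  "affine (map f [0..<n], b) (map g [0..<n]) = (\<Sum>j<n. f j * g j) + b"
  unfolding affine_def by (induction n) (simp_all add: zip_map_map)

lemma sum_list_map2_replicate_zero: "sum_list (map2 (*) (replicate k 0) z) = (0::real)"
proof (induction k arbitrary: z)
  case (Suc k)
  then show ?case by (cases z) auto
qed simp

lemma affine_append_zeros:
  "length w = length z1 \<Longrightarrow> k = length z2 \<Longrightarrow>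
   affine (w @ replicate k 0, b) (z1 @ z2) = affine (w, b) z1"
  unfolding affine_def by (simp add: sum_list_map2_replicate_zero)

lemma affine_zeros_append:
  "k = length z1 \<Longrightarrow> affine (replicate k 0 @ w, b) (z1 @ z2) = affine (w, b) z2"
  unfolding affine_def by (simp add: sum_list_map2_replicate_zero)

lemma eval_layer_append: "eval_layer act (L1 @ L2) y = eval_layer act L1 y @ eval_layer act L2 y"
  by (simp add: eval_layer_def)

lemma length_eval_layer [simp]: "length (eval_layer act L y) = length L"
  by (simp add: eval_layer_def)

lemma ex_weights_bounded: "\<exists>B\<ge>0. weights_bounded B F"
proof -
  define W where
    "W = (\<Union>nr \<in> insert (snd F) (\<Union> (set ` set (fst F))). insert (snd nr) (set (fst nr)))"
  define B where "B = Max (insert 0 (abs ` W))"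
  have "finite W" by (simp add: W_def)
  then have "\<forall>w\<in>W. \<bar>w\<bar> \<le> B" "0 \<le> B" by (simp_all add: B_def)
  then show ?thesis
    unfolding weights_bounded_def neuron_bounded_def W_def by blast
qed

definition unit_neurons :: "nat \<Rightarrow> neuron list" where
  "unit_neurons d = map (\<lambda>j. (map (\<lambda>i. if i = j then 1 else 0) [0..<d], 0)) [0..<d]"

lemma length_unit_neurons: "length (unit_neurons d) = d"
  by (simp add: unit_neurons_def)

lemma unit_neurons_wf: "\<forall>n\<in>set (unit_neurons d). length (fst n) = d"
  by (auto simp: unit_neurons_def)

lemma affine_unit_neurons: "map (\<lambda>n. affine n (map x [0..<d])) (unit_neurons d) = map x [0..<d]"
proof -
  have "(\<Sum>i<d. (if i = j then 1 else 0) * x i) = x j" if "j < d" for j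
  proof -
    have "(\<Sum>i<d. (if i = j then 1 else 0) * x i) = (\<Sum>i<d. if i = j then x i else 0)"
      by (intro sum.cong) auto
    with that show ?thesis by simp
  qed
  then show ?thesis by (simp add: unit_neurons_def affine_map_upt)
qed

text \<open>A list of neurons stands for affine functions of the current layer that still have to be
  multiplied pairwise. \<open>pair_layer\<close> adds the hidden layer of one level of the product tree and
  returns the neurons that read the results off this new layer.\<close>

context
  fixes t :: real and \<alpha> \<beta> :: "nat \<Rightarrow> real" and N :: nat
begin

text \<open>Together with \<open>mult_out_weights\<close>, the two halves of \<open>mult_block\<close> evaluate
  \<open>f_net_sq\<close> at \<open>u + v\<close> and at \<open>u - v\<close>, as in the definition of \<open>f_mult\<close>.\<close>

definition mult_block :: "neuron \<Rightarrow> neuron \<Rightarrow> layer" where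
  "mult_block n1 n2 = map (\<lambda>j. neuron_comb (\<beta> j) (\<beta> j) t n1 n2) [0..<N]
                    @ map (\<lambda>j. neuron_comb (\<beta> j) (- \<beta> j) t n1 n2) [0..<N]"

definition mult_out_weights :: "real list" where
  "mult_out_weights =
     (let \<kappa> = 2 / deriv (deriv sigmoid) t
      in map (\<lambda>j. \<kappa> * \<alpha> j / 4) [0..<N] @ map (\<lambda>j. - (\<kappa> * \<alpha> j / 4)) [0..<N])"

definition id_block :: "neuron \<Rightarrow> layer" where
  "id_block n = map (\<lambda>j. neuron_comb (real j) 0 0 n n) [0..<N]"

definition id_out_weights :: "real list" where
  "id_out_weights = map (\<lambda>j. 4 * coeff (lagrange_basis N j) 1) [0..<N]"

fun pair_layer :: "neuron list \<Rightarrow> layer \<times> neuron list" where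
  "pair_layer [] = ([], [])"
| "pair_layer [n] = (id_block n, [(id_out_weights, 0)])"
| "pair_layer (n1 # n2 # ns) =
     (let (L, vs) = pair_layer ns
      in (mult_block n1 n2 @ L,
          (mult_out_weights @ replicate (length L) 0, 0)
            # map (\<lambda>v. (replicate (2 * N) 0 @ fst v, snd v)) vs))"

fun pair_layers :: "nat \<Rightarrow> neuron list \<Rightarrow> layer list \<times> neuron list" where
  "pair_layers 0 ns = ([], ns)"
| "pair_layers (Suc k) ns =
     (let (Ls, vs) = pair_layers k (snd (pair_layer ns)) in (fst (pair_layer ns) # Ls, vs))"

abbreviation approx_pairs :: "real list \<Rightarrow> real list" where
  "approx_pairs \<equiv> combine_pairs (f_mult t \<alpha> \<beta> N) (sigmoid_id N)"

lemma affine_id_block: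
  assumes "length (fst n) = length y"
  shows "affine (id_out_weights, 0) (eval_layer sigmoid (id_block n) y) = sigmoid_id N (affine n y)"
proof -
  have "eval_layer sigmoid (id_block n) y = map (\<lambda>j. sigmoid (real j * affine n y)) [0..<N]"
    using assms by (simp add: eval_layer_def id_block_def affine_neuron_comb)
  then show ?thesis
    by (simp add: id_out_weights_def sigmoid_id_def affine_map_upt)
qed

lemma affine_mult_block:
  assumes "length (fst n1) = length y" "length (fst n2) = length y"
  shows "affine (mult_out_weights, 0) (eval_layer sigmoid (mult_block n1 n2) y)
       = f_mult t \<alpha> \<beta> N (affine n1 y) (affine n2 y)"
proof -
  define u v where "u = affine n1 y" and "v = affine n2 y"
  have "eval_layer sigmoid (mult_block n1 n2) y =
      map (\<lambda>j. sigmoid (\<beta> j * (u + v) + t)) [0..<N] @ map (\<lambda>j. sigmoid (\<beta> j * (u - v) + t)) [0..<N]"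
    using assms by (simp add: eval_layer_def mult_block_def u_def v_def affine_neuron_comb algebra_simps)
  then have "affine (mult_out_weights, 0) (eval_layer sigmoid (mult_block n1 n2) y)
      = (let \<kappa> = 2 / deriv (deriv sigmoid) t in
          (\<Sum>j<N. \<kappa> * \<alpha> j / 4 * sigmoid (\<beta> j * (u + v) + t))
          - (\<Sum>j<N. \<kappa> * \<alpha> j / 4 * sigmoid (\<beta> j * (u - v) + t)))"
    using affine_map_upt by (simp add: mult_out_weights_def affine_def sum_negf)
  also have "\<dots> = f_mult t \<alpha> \<beta> N u v"
    by (simp add: f_mult_def f_net_sq_def sum_distrib_left sum_divide_distrib diff_divide_distrib mult_ac)
  finally show ?thesis unfolding u_def v_def .
qed

lemma length_pair_layer_out: "length (snd (pair_layer ns)) = (length ns + 1) div 2"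
  by (induction ns rule: pair_layer.induct) (auto split: prod.splits)

lemma length_pair_layer_le: "length (fst (pair_layer ns)) \<le> 2 * N * length ns"
  by (induction ns rule: pair_layer.induct) (auto split: prod.splits simp: mult_block_def id_block_def)

lemma pair_layer_wf:
  assumes "\<forall>n\<in>set ns. length (fst n) = m"
  shows "\<forall>nr\<in>set (fst (pair_layer ns)). length (fst nr) = m"
    and "\<forall>v\<in>set (snd (pair_layer ns)). length (fst v) = length (fst (pair_layer ns))"
  using assms
  by (induction ns rule: pair_layer.induct)
     (auto split: prod.splits simp: id_block_def id_out_weights_def mult_block_def
        mult_out_weights_def neuron_comb_def Let_def)

lemma eval_pair_layer:
  assumes "\<forall>n\<in>set ns. length (fst n) = length y"
  shows "map (\<lambda>v. affine v (eval_layer sigmoid (fst (pair_layer ns)) y)) (snd (pair_layer ns))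
       = approx_pairs (map (\<lambda>n. affine n y) ns)"
  using assms
proof (induction ns rule: pair_layer.induct)
  case (2 n)
  then show ?case by (simp add: affine_id_block)
next
  case (3 n1 n2 ns)
  obtain L vs where L: "pair_layer ns = (L, vs)" by fastforce
  have "length (eval_layer sigmoid (mult_block n1 n2) y) = 2 * N"
    by (simp add: mult_block_def)
  moreover have "length mult_out_weights = 2 * N"
    by (simp add: mult_out_weights_def)
  ultimately show ?case
    using 3 L by (simp add: eval_layer_append affine_append_zeros affine_zeros_append affine_mult_block o_def)
qed simp

lemma eval_pair_layers:
  assumes "\<forall>n\<in>set ns. length (fst n) = length y"
  shows "map (\<lambda>v. affine v (eval_hidden sigmoid (fst (pair_layers k ns)) y)) (snd (pair_layers k ns))
       = (approx_pairs ^^ k) (map (\<lambda>n. affine n y) ns)"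
  using assms
proof (induction k arbitrary: ns y)
  case (Suc k)
  obtain Ls vs where Ls: "pair_layers k (snd (pair_layer ns)) = (Ls, vs)" by fastforce
  have "\<forall>v\<in>set (snd (pair_layer ns)). length (fst v) = length (eval_layer sigmoid (fst (pair_layer ns)) y)"
    using pair_layer_wf(2)[OF Suc.prems] by simp
  from Suc.IH[OF this] show ?case
    using Ls eval_pair_layer[OF Suc.prems] by (simp add: funpow_swap1)
qed simp

lemma length_pair_layers: "length (fst (pair_layers k ns)) = k"
  by (induction k arbitrary: ns) (simp_all add: case_prod_beta)

lemma pair_layers_width: "L \<in> set (fst (pair_layers k ns)) \<Longrightarrow> length L \<le> 2 * N * length ns"
proof (induction k arbitrary: ns)
  case (Suc k)
  then consider "L = fst (pair_layer ns)" | "L \<in> set (fst (pair_layers k (snd (pair_layer ns))))"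
    by (auto simp: case_prod_beta)
  then show ?case
  proof cases
    case 1
    then show ?thesis using length_pair_layer_le by simp
  next
    case 2
    then have "length L \<le> 2 * N * length (snd (pair_layer ns))" by (rule Suc.IH)
    also have "\<dots> \<le> 2 * N * length ns"
      unfolding length_pair_layer_out by (intro mult_le_mono2) presburger
    finally show ?thesis .
  qed
qed simp

lemma pair_layers_wf:
  assumes "\<forall>n\<in>set ns. length (fst n) = m"
  shows "\<exists>m'. layers_wf m (fst (pair_layers k ns)) m'
               \<and> (\<forall>v\<in>set (snd (pair_layers k ns)). length (fst v) = m')"
  using assms
proof (induction k arbitrary: ns m)
  case (Suc k)
  then show ?case
    using pair_layer_wf[OF Suc.prems] Suc.IH[OF pair_layer_wf(2)[OF Suc.prems]]
    by (simp add: case_prod_beta)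
qed auto

lemma length_pair_layers_out:
  "1 \<le> length ns \<Longrightarrow> length ns \<le> 2 ^ k \<Longrightarrow> length (snd (pair_layers k ns)) = 1"
proof (induction k arbitrary: ns)
  case (Suc k)
  have "\<forall>n m :: nat. 1 \<le> n \<longrightarrow> n \<le> 2 * m \<longrightarrow> 1 \<le> (n + 1) div 2 \<and> (n + 1) div 2 \<le> m"
    by presburger
  then have "1 \<le> length (snd (pair_layer ns))" "length (snd (pair_layer ns)) \<le> 2 ^ k"
    using Suc.prems unfolding length_pair_layer_out by auto
  from Suc.IH[OF this] show ?case by (simp add: case_prod_beta)
qed simp

definition mult_net :: "nat \<Rightarrow> ffnet" where
  "mult_net d = (let P = pair_layers (ceillog2 d) (unit_neurons d) in (fst P, hd (snd P)))"

lemma pair_layers_unit_neurons_out: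
  assumes "1 \<le> d"
  obtains v where "snd (pair_layers (ceillog2 d) (unit_neurons d)) = [v]"
    and "mult_net d = (fst (pair_layers (ceillog2 d) (unit_neurons d)), v)"
proof -
  have "d \<le> 2 ^ ceillog2 d" using ceillog2_le_iff[of d "ceillog2 d"] assms by simp
  with assms have "length (snd (pair_layers (ceillog2 d) (unit_neurons d))) = 1"
    by (intro length_pair_layers_out) (simp_all add: length_unit_neurons)
  then obtain v where "snd (pair_layers (ceillog2 d) (unit_neurons d)) = [v]"
    by (metis One_nat_def length_0_conv length_Suc_conv)
  then show ?thesis using that by (simp add: mult_net_def)
qed

lemma mult_net_shape:
  assumes "1 \<le> d"
  shows "net_wf d (mult_net d)"
    and "length (fst (mult_net d)) = ceillog2 d"
    and "\<forall>L\<in>set (fst (mult_net d)). length L \<le> 2 * N * d"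
proof -
  obtain v where out: "snd (pair_layers (ceillog2 d) (unit_neurons d)) = [v]"
    and net: "mult_net d = (fst (pair_layers (ceillog2 d) (unit_neurons d)), v)"
    using pair_layers_unit_neurons_out[OF assms] .
  show "net_wf d (mult_net d)"
    using pair_layers_wf[OF unit_neurons_wf[of d], where k="ceillog2 d"] out net
    by (auto simp: net_wf_def)
  show "length (fst (mult_net d)) = ceillog2 d"
    using net by (simp add: length_pair_layers)
  show "\<forall>L\<in>set (fst (mult_net d)). length L \<le> 2 * N * d"
    using pair_layers_width[of _ "ceillog2 d" "unit_neurons d"] net
    by (simp add: length_unit_neurons)
qed

lemma eval_mult_net:
  assumes "1 \<le> d"
  shows "[net_eval sigmoid (mult_net d) (map x [0..<d])]
       = (approx_pairs ^^ ceillog2 d) (map x [0..<d])"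
proof -
  obtain v where out: "snd (pair_layers (ceillog2 d) (unit_neurons d)) = [v]"
    and net: "mult_net d = (fst (pair_layers (ceillog2 d) (unit_neurons d)), v)"
    using pair_layers_unit_neurons_out[OF assms] .
  have "\<forall>n\<in>set (unit_neurons d). length (fst n) = length (map x [0..<d])"
    using unit_neurons_wf by simp
  from eval_pair_layers[OF this, of "ceillog2 d"] show ?thesis
    using out net by (simp add: net_eval_def affine_unit_neurons)
qed

lemma mult_net_error:
  assumes "1 \<le> d" "1 \<le> N" "0 < A" "A \<le> 1" "0 \<le> c" "0 \<le> K"
    and "\<And>r x y. 0 < r \<Longrightarrow> x \<in> {-r..r} \<Longrightarrow> y \<in> {-r..r} \<Longrightarrow>
           \<bar>f_mult t \<alpha> \<beta> N x y - x * y\<bar> \<le> c * r ^ N"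
    and "\<And>u. \<bar>sigmoid_id N u - u\<bar> \<le> K * \<bar>u\<bar> ^ N"
    and "\<forall>j<d. x j \<in> {-A..A}"
  shows "\<bar>net_eval sigmoid (mult_net d) (map x [0..<d]) - (\<Prod>j<d. x j)\<bar>
           \<le> (pairing_error (c + K) N ^^ ceillog2 d) 0 * A ^ N"
proof -
  have "list_all2 (\<lambda>v p. \<bar>v - p\<bar> \<le> 0 * A ^ N \<and> \<bar>p\<bar> \<le> A) (map x [0..<d]) (map x [0..<d])"
    using assms(9) by (auto simp: list_all2_conv_all_nth abs_le_iff)
  from combine_pairs_funpow_error[OF assms(2-8) order_refl this, of "ceillog2 d"]
  obtain p where p: "(combine_pairs (*) (\<lambda>x. x) ^^ ceillog2 d) (map x [0..<d]) = [p]"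
    and err: "\<bar>net_eval sigmoid (mult_net d) (map x [0..<d]) - p\<bar>
                \<le> (pairing_error (c + K) N ^^ ceillog2 d) 0 * A ^ N"
    unfolding eval_mult_net[OF assms(1), symmetric] by (auto simp: list_all2_Cons1)
  have "p = prod_list (map x [0..<d])"
    using prod_list_combine_pairs_funpow[of "ceillog2 d" "map x [0..<d]"] p by simp
  also have "\<dots> = (\<Prod>j<d. x j)"
    by (induction d) auto
  finally show ?thesis using err by simp
qed

end

theorem lemma11:
  fixes N d :: nat and t c54 c56 :: real and \<alpha> \<beta> :: "nat \<Rightarrow> real"
  assumes "N > 2" and "d \<ge> 1"
    and "deriv (deriv sigmoid) t \<noteq> 0"
    and "c54 \<ge> 0"
    and "\<And>A x. A > 0 \<Longrightarrow> x \<in> {-A..A} \<Longrightarrow> \<bar>f_net_sq t \<alpha> \<beta> N x - x\<^sup>2\<bar> \<le> c54 * A ^ N"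
    and "c56 > 0"
    and "\<And>A x y. A > 0 \<Longrightarrow> x \<in> {-A..A} \<Longrightarrow> y \<in> {-A..A} \<Longrightarrow>
            \<bar>f_mult t \<alpha> \<beta> N x y - x * y\<bar> \<le> c56 * A ^ N"
  shows "\<exists>c57 B. c57 \<ge> 0 \<and> B \<ge> 0 \<and>
           (\<forall>A. 0 < A \<and> A \<le> 1 \<and> c56 * 4 ^ (d * N) * A ^ (N - 1) \<le> 1 \<longrightarrow>
              (\<exists>F :: ffnet. net_wf d F
                 \<and> length (fst F) \<le> nat \<lceil>log 2 (real d)\<rceil>
                 \<and> (\<forall>L\<in>set (fst F). length L \<le> 2 * N * d)
                 \<and> weights_bounded B F
                 \<and> (\<forall>x :: nat \<Rightarrow> real. (\<forall>j<d. x j \<in> {-A..A}) \<longrightarrow>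
                      \<bar>net_eval sigmoid F (map x [0..<d]) - (\<Prod>j<d. x j)\<bar> \<le> c57 * A ^ N)))"
proof -
  have N: "2 \<le> N" "1 \<le> N" and c56: "0 \<le> c56" using assms(1,6) by auto
  obtain K where K: "0 \<le> K" "\<And>u. \<bar>sigmoid_id N u - u\<bar> \<le> K * \<bar>u\<bar> ^ N"
    using sigmoid_id_approx[OF N(1)] by blast
  define F where "F = mult_net t \<alpha> \<beta> N d"
  define c57 where "c57 = (pairing_error (c56 + K) N ^^ ceillog2 d) 0"
  obtain B where B: "0 \<le> B" "weights_bounded B F"
    using ex_weights_bounded by blast
  have c57: "0 \<le> c57"
    unfolding c57_def using c56 K(1) by (simp add: pairing_error_funpow_nonneg)
  have "ceillog2 d = nat \<lceil>log 2 (real d)\<rceil>"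
    using assms(2) by (simp add: ceillog2_def)
  then have shape: "net_wf d F" "length (fst F) = nat \<lceil>log 2 (real d)\<rceil>"
    "\<forall>L\<in>set (fst F). length L \<le> 2 * N * d"
    using mult_net_shape[OF assms(2)] unfolding F_def by simp_all
  have error: "\<bar>net_eval sigmoid F (map x [0..<d]) - (\<Prod>j<d. x j)\<bar> \<le> c57 * A ^ N"
    if "0 < A" "A \<le> 1" "\<forall>j<d. x j \<in> {-A..A}" for A x
    unfolding F_def c57_def
    by (rule mult_net_error[OF assms(2) N(2) that(1,2) c56 K(1) assms(7) K(2) that(3)])
  show ?thesis
    using c57 B shape error by (intro exI[of _ c57] exI[of _ B] conjI allI impI exI[of _ F]) auto
qed

end
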